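(* Let $R$ be a commutative Noetherian semi-local ring and $n\ge 1$. A map $(-)^*:M_n(R)\to M_n(R)$ makes $M_n(R)$ an $R^*$-algebra if and only if there exist an invertible matrix $C\in M_n(R)$ and an element $a\in R$ such that (1) $C^T=aC$, (2) $a^2=1$, and (3) $A^*=C^{-1}A^TC$ for all $A\in M_n(R)$.
   Context: An $R$-algebra $E$ (possibly noncommutative) is an $R^*$-algebra if there is a map of abelian groups $(-)^*:E\to E$ with $(ab)^*=b^*a^*$, $1_E^*=1_E$, $(ra)^*=ra^*$ for $r\in R$, and $a^{**}=a$ for all $a,b\in E$. $A^T$ denotes the transpose. *)

theory Defs
  imports "HOL-Analysis.Analysis"
begin

definition is_ideal :: "'a::comm_ring_1 set \<Rightarrow> bool" where
  "is_ideal I \<longleftrightarrow> 0 \<in> I \<and> (\<forall>x\<in>I. \<forall>y\<in>I. x + y \<in> I) \<and> (\<forall>r. \<forall>x\<in>I. r * x \<in> I)"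

definition noetherian_cring :: "'a::comm_ring_1 itself \<Rightarrow> bool" where
  "noetherian_cring _ \<longleftrightarrow>
     (\<forall>I :: nat \<Rightarrow> 'a set. (\<forall>k. is_ideal (I k) \<and> I k \<subseteq> I (Suc k))
        \<longrightarrow> (\<exists>N. \<forall>m\<ge>N. I m = I N))"

definition maximal_ideal :: "'a::comm_ring_1 set \<Rightarrow> bool" where
  "maximal_ideal I \<longleftrightarrow> is_ideal I \<and> I \<noteq> UNIV \<and>
     (\<forall>J. is_ideal J \<and> I \<subseteq> J \<longrightarrow> J = I \<or> J = UNIV)"

definition semilocal_cring :: "'a::comm_ring_1 itself \<Rightarrow> bool" where
  "semilocal_cring _ \<longleftrightarrow> finite {I :: 'a set. maximal_ideal I}"

definition mscale :: "'a::semiring_1 \<Rightarrow> 'a^'n^'m \<Rightarrow> 'a^'n^'m" where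
  "mscale r A = (\<chi> i j. r * A $ i $ j)"

definition is_star_algebra_map :: "('a::comm_ring_1^'n^'n \<Rightarrow> 'a^'n^'n) \<Rightarrow> bool" where
  "is_star_algebra_map s \<longleftrightarrow>
     (\<forall>A B. s (A + B) = s A + s B) \<and>
     (\<forall>A B. s (A ** B) = s B ** s A) \<and>
     s (mat 1) = mat 1 \<and>
     (\<forall>r A. s (mscale r A) = mscale r (s A)) \<and>
     (\<forall>A. s (s A) = A)"

end

theory Submission
  imports Defs
begin

text \<open>
  Composing a star map with the transpose gives an R-algebra automorphism \<open>\<phi>\<close> of
  \<open>M\<^sub>n(R)\<close>. Over a semi-local ring every such automorphism is inner (Skolem--Noether): the
  images \<open>F\<^sub>i\<^sub>j = \<phi>(E\<^sub>i\<^sub>j)\<close> of the matrix units form a full system of matrix units, no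
  maximal ideal contains all entries of \<open>F\<^sub>1\<^sub>1\<close>, and with separating elements for the finitely
  many maximal ideals one finds vectors \<open>y, u\<close> with \<open>y\<^sup>T F\<^sub>1\<^sub>1 u = 1\<close>; the columns \<open>F\<^sub>j\<^sub>1 u\<close>
  then form an invertible \<open>P\<close> with \<open>\<phi>(A) = P A P\<^sup>-\<^sup>1\<close>. Hence \<open>A\<^sup>* = C\<^sup>-\<^sup>1 A\<^sup>T C\<close> with
  \<open>C = P\<^sup>T\<close>, and involutivity forces \<open>C\<^sup>-\<^sup>1 C\<^sup>T\<close> to be central, i.e. \<open>C\<^sup>T = a C\<close>, and then
  \<open>a\<^sup>2 = 1\<close>.
\<close>

section \<open>Ideals and maximal ideals\<close>

lemma is_ideal_zero: "is_ideal I \<Longrightarrow> 0 \<in> I"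
  by (simp add: is_ideal_def)

lemma is_ideal_add: "is_ideal I \<Longrightarrow> x \<in> I \<Longrightarrow> y \<in> I \<Longrightarrow> x + y \<in> I"
  by (simp add: is_ideal_def)

lemma is_ideal_mult_left: "is_ideal I \<Longrightarrow> x \<in> I \<Longrightarrow> r * x \<in> I"
  by (simp add: is_ideal_def)

lemma is_ideal_mult_right: "is_ideal I \<Longrightarrow> x \<in> I \<Longrightarrow> x * r \<in> I"
  by (metis is_ideal_mult_left mult.commute)

lemma is_ideal_diff: "is_ideal I \<Longrightarrow> x \<in> I \<Longrightarrow> y \<in> I \<Longrightarrow> x - y \<in> I"
  using is_ideal_add[of I x "(-1) * y"] is_ideal_mult_left[of I y "-1"] by simp

lemma is_ideal_sum:
  assumes "is_ideal I" and "\<And>x. x \<in> S \<Longrightarrow> f x \<in> I"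
  shows "sum f S \<in> I"
  using assms(2)
  by (induction S rule: infinite_finite_induct) (auto intro: is_ideal_zero is_ideal_add assms(1))

lemma is_ideal_one_imp_UNIV: "is_ideal I \<Longrightarrow> 1 \<in> I \<Longrightarrow> I = UNIV"
  using is_ideal_mult_left[of I 1] by auto

lemma is_ideal_principal: "is_ideal (range (\<lambda>r. r * c))"
  unfolding is_ideal_def
proof (intro conjI ballI allI)
  show "0 \<in> range (\<lambda>r. r * c)" by (rule image_eqI[of _ _ 0]) simp_all
next
  fix x y assume "x \<in> range (\<lambda>r. r * c)" "y \<in> range (\<lambda>r. r * c)"
  then obtain r s where "x = r * c" "y = s * c" by blast
  then show "x + y \<in> range (\<lambda>r. r * c)" by (intro image_eqI[of _ _ "r + s"]) (simp_all add: distrib_right)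
next
  fix t x assume "x \<in> range (\<lambda>r. r * c)"
  then obtain r where "x = r * c" by blast
  then show "t * x \<in> range (\<lambda>r. r * c)" by (intro image_eqI[of _ _ "t * r"]) (simp_all add: mult.assoc)
qed

lemma maximal_ideal_is_ideal: "maximal_ideal m \<Longrightarrow> is_ideal m"
  by (simp add: maximal_ideal_def)

lemma one_notin_maximal_ideal: "maximal_ideal m \<Longrightarrow> 1 \<notin> m"
  using is_ideal_one_imp_UNIV maximal_ideal_def by blast

lemma maximal_ideal_mult_notin:
  fixes a b :: "'a::comm_ring_1"
  assumes m: "maximal_ideal m" and "a \<notin> m" and "b \<notin> m"
  shows "a * b \<notin> m"
proof
  assume "a * b \<in> m"
  have I: "is_ideal m" using m by (rule maximal_ideal_is_ideal)
  define J where "J = {x + r * a | x r. x \<in> m}"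
  have "is_ideal J"
    unfolding is_ideal_def J_def
  proof (intro conjI ballI allI)
    show "0 \<in> {x + r * a |x r. x \<in> m}"
      using is_ideal_zero[OF I] by (intro CollectI exI[of _ 0]) auto
  next
    fix x y assume "x \<in> {x + r * a |x r. x \<in> m}" "y \<in> {x + r * a |x r. x \<in> m}"
    then obtain x1 r1 x2 r2 where "x = x1 + r1 * a" "y = x2 + r2 * a" "x1 \<in> m" "x2 \<in> m"
      by blast
    then show "x + y \<in> {x + r * a |x r. x \<in> m}"
      by (intro CollectI exI[of _ "x1 + x2"] exI[of _ "r1 + r2"])
        (auto simp: is_ideal_add[OF I] algebra_simps)
  next
    fix r x assume "x \<in> {x + r * a |x r. x \<in> m}"
    then obtain x1 r1 where "x = x1 + r1 * a" "x1 \<in> m" by blast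
    then show "r * x \<in> {x + r * a |x r. x \<in> m}"
      by (intro CollectI exI[of _ "r * x1"] exI[of _ "r * r1"])
        (auto simp: is_ideal_mult_left[OF I] algebra_simps)
  qed
  moreover have "m \<subseteq> J" unfolding J_def by (force intro: exI[of _ 0])
  moreover have "a \<in> J" unfolding J_def using is_ideal_zero[OF I] by (force intro: exI[of _ 1])
  ultimately have "J = UNIV" using m \<open>a \<notin> m\<close> unfolding maximal_ideal_def by blast
  then obtain x r where "1 = x + r * a" "x \<in> m" unfolding J_def by blast
  then have "b = b * x + r * (a * b)" by (metis mult.commute mult.left_commute mult_1 distrib_left)
  then have "b \<in> m"
    using is_ideal_add[OF I] is_ideal_mult_left[OF I] is_ideal_mult_right[OF I] \<open>a * b \<in> m\<close> \<open>x \<in> m\<close>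
    by metis
  with \<open>b \<notin> m\<close> show False ..
qed

lemma maximal_ideal_prod_notin:
  assumes "maximal_ideal m" and "\<And>x. x \<in> S \<Longrightarrow> (f x :: 'a::comm_ring_1) \<notin> m" and "finite S"
  shows "prod f S \<notin> m"
  using assms(3,2)
proof (induction S rule: finite_induct)
  case empty
  then show ?case using one_notin_maximal_ideal[OF assms(1)] by simp
next
  case (insert x S)
  then show ?case by (simp add: maximal_ideal_mult_notin[OF assms(1)])
qed

lemma is_ideal_Union_chain:
  assumes "subset.chain {J. is_ideal J} \<C>" and "\<C> \<noteq> {}"
  shows "is_ideal (\<Union>\<C>)"
proof -
  have ideal: "\<And>J. J \<in> \<C> \<Longrightarrow> is_ideal J"
    and chain: "\<And>X Y. X \<in> \<C> \<Longrightarrow> Y \<in> \<C> \<Longrightarrow> X \<subseteq> Y \<or> Y \<subseteq> X"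
    using assms(1) unfolding subset.chain_def by auto
  show ?thesis
    unfolding is_ideal_def
  proof (intro conjI ballI allI)
    obtain J where "J \<in> \<C>" using assms(2) by blast
    then show "0 \<in> \<Union>\<C>" using is_ideal_zero[OF ideal] by blast
  next
    fix x y assume "x \<in> \<Union>\<C>" "y \<in> \<Union>\<C>"
    then obtain X Y where XY: "x \<in> X" "y \<in> Y" "X \<in> \<C>" "Y \<in> \<C>" by blast
    from chain[OF XY(3,4)] show "x + y \<in> \<Union>\<C>"
    proof
      assume "X \<subseteq> Y"
      then show ?thesis using XY is_ideal_add[OF ideal[OF XY(4)]] by blast
    next
      assume "Y \<subseteq> X"
      then show ?thesis using XY is_ideal_add[OF ideal[OF XY(3)]] by blast
    qed
  next
    fix r x assume "x \<in> \<Union>\<C>"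
    then obtain X where "x \<in> X" "X \<in> \<C>" by blast
    then show "r * x \<in> \<Union>\<C>" using is_ideal_mult_left[OF ideal] by blast
  qed
qed

lemma ideal_le_maximal_ideal:
  fixes I :: "'a::comm_ring_1 set"
  assumes "is_ideal I" and "1 \<notin> I"
  obtains M where "maximal_ideal M" and "I \<subseteq> M"
proof -
  define \<A> where "\<A> = {J. is_ideal J \<and> I \<subseteq> J \<and> (1::'a) \<notin> J}"
  have "\<Union>\<C> \<in> \<A>" if "\<C> \<noteq> {}" and "subset.chain \<A> \<C>" for \<C>
  proof -
    have "subset.chain {J. is_ideal J} \<C>"
      using that(2) unfolding subset.chain_def \<A>_def by blast
    then have "is_ideal (\<Union>\<C>)" using that(1) by (rule is_ideal_Union_chain)
    moreover have "\<C> \<subseteq> \<A>" using that(2) unfolding subset.chain_def by blast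
    ultimately show ?thesis using that(1) unfolding \<A>_def by blast
  qed
  moreover have "I \<in> \<A>" using assms unfolding \<A>_def by blast
  ultimately obtain M where M: "M \<in> \<A>" and M_max: "\<And>X. X \<in> \<A> \<Longrightarrow> M \<subseteq> X \<Longrightarrow> X = M"
    using subset_Zorn_nonempty[of \<A>] by blast
  have "maximal_ideal M"
    unfolding maximal_ideal_def
  proof (intro conjI allI impI)
    show "is_ideal M" and "M \<noteq> UNIV" using M unfolding \<A>_def by blast+
  next
    fix J assume J: "is_ideal J \<and> M \<subseteq> J"
    show "J = M \<or> J = UNIV"
    proof (cases "1 \<in> J")
      case True
      then show ?thesis using J is_ideal_one_imp_UNIV by blast
    next
      case False
      then have "J \<in> \<A>" using J M unfolding \<A>_def by blast
      then show ?thesis using M_max J by blast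
    qed
  qed
  moreover have "I \<subseteq> M" using M unfolding \<A>_def by blast
  ultimately show ?thesis by (rule that)
qed

lemma unit_if_notin_maximal_ideals:
  fixes c :: "'a::comm_ring_1"
  assumes "\<And>m. maximal_ideal m \<Longrightarrow> c \<notin> m"
  obtains d where "c * d = 1"
proof -
  have "1 \<in> range (\<lambda>r. r * c)"
  proof (rule ccontr)
    assume "1 \<notin> range (\<lambda>r. r * c)"
    then obtain M where "maximal_ideal M" and "range (\<lambda>r. r * c) \<subseteq> M"
      using ideal_le_maximal_ideal[OF is_ideal_principal] by blast
    moreover have "c \<in> range (\<lambda>r. r * c)" by (rule image_eqI[of _ _ 1]) simp_all
    ultimately show False using assms by blast
  qed
  then obtain d where "1 = d * c" by blast
  then show ?thesis using that by (simp add: mult.commute)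
qed

section \<open>Semi-local rings\<close>

lemma semilocal_separating_element:
  fixes m :: "'a::comm_ring_1 set"
  assumes fin: "finite {I::'a set. maximal_ideal I}" and m: "maximal_ideal m"
  obtains t where "t \<notin> m" and "\<And>m'. maximal_ideal m' \<Longrightarrow> m' \<noteq> m \<Longrightarrow> t \<in> m'"
proof -
  define \<M> where "\<M> = {I::'a set. maximal_ideal I} - {m}"
  have "\<exists>s. s \<in> m' \<and> s \<notin> m" if "m' \<in> \<M>" for m'
  proof (rule ccontr)
    assume "\<not> (\<exists>s. s \<in> m' \<and> s \<notin> m)"
    then have "m' \<subseteq> m" by blast
    moreover have "maximal_ideal m'" and "m' \<noteq> m" using that unfolding \<M>_def by auto
    ultimately show False using m unfolding maximal_ideal_def by blast
  qed
  then obtain s where s: "\<And>m'. m' \<in> \<M> \<Longrightarrow> s m' \<in> m' \<and> s m' \<notin> m" by metis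
  have fin_\<M>: "finite \<M>" using fin unfolding \<M>_def by simp
  have "prod s \<M> \<notin> m"
    using maximal_ideal_prod_notin[OF m _ fin_\<M>] s by blast
  moreover have "prod s \<M> \<in> m'" if "maximal_ideal m'" "m' \<noteq> m" for m'
  proof -
    have "m' \<in> \<M>" using that unfolding \<M>_def by simp
    then have "prod s \<M> = s m' * prod s (\<M> - {m'})"
      using prod.remove[OF fin_\<M>] by blast
    then show ?thesis
      using s[OF \<open>m' \<in> \<M>\<close>] is_ideal_mult_right maximal_ideal_is_ideal[OF that(1)] by metis
  qed
  ultimately show ?thesis using that by blast
qed

text \<open>The pairing \<open>y\<^sup>T v\<close>; the library's \<open>inner\<close> only exists over the reals.\<close>

definition vec_dot :: "'a::comm_semiring_1^'n::finite \<Rightarrow> 'a^'n \<Rightarrow> 'a" where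
  "vec_dot x y = (\<Sum>i\<in>UNIV. x$i * y$i)"

lemma vec_dot_vector_matrix_mult: "vec_dot (x v* A) y = vec_dot x (A *v y)"
proof -
  have "vec_dot (x v* A) y = (\<Sum>k\<in>UNIV. \<Sum>i\<in>UNIV. x$i * A$i$k * y$k)"
    by (simp add: vec_dot_def vector_matrix_mult_def sum_distrib_right)
  also have "\<dots> = (\<Sum>i\<in>UNIV. \<Sum>k\<in>UNIV. x$i * A$i$k * y$k)"
    by (rule sum.swap)
  also have "\<dots> = vec_dot x (A *v y)"
    by (simp add: vec_dot_def matrix_vector_mult_def sum_distrib_left mult.assoc)
  finally show ?thesis .
qed

lemma sum_sum_delta_mult:
  fixes t :: "'b \<Rightarrow> 'a::comm_semiring_1" and idx :: "'b \<Rightarrow> 'c::finite"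
  shows "(\<Sum>k\<in>UNIV. (\<Sum>p\<in>S. if idx p = k then t p else 0) * v k) = (\<Sum>p\<in>S. t p * v (idx p))"
proof -
  have "(\<Sum>k\<in>UNIV. (\<Sum>p\<in>S. if idx p = k then t p else 0) * v k)
      = (\<Sum>k\<in>UNIV. \<Sum>p\<in>S. if idx p = k then t p * v k else 0)"
    by (auto simp: sum_distrib_right intro!: sum.cong)
  also have "\<dots> = (\<Sum>p\<in>S. \<Sum>k\<in>UNIV. if idx p = k then t p * v k else 0)"
    by (rule sum.swap)
  also have "\<dots> = (\<Sum>p\<in>S. t p * v (idx p))"
    by (simp add: sum.delta)
  finally show ?thesis .
qed

lemma separated_double_sum_notin_maximal_ideal:
  fixes t :: "'a::comm_ring_1 set \<Rightarrow> 'a"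
  assumes m0: "maximal_ideal m0" and "finite \<M>" and "m0 \<in> \<M>"
    and "t m0 \<notin> m0" and t_in: "\<And>m. m \<in> \<M> \<Longrightarrow> m \<noteq> m0 \<Longrightarrow> t m \<in> m0"
    and "g m0 m0 \<notin> m0"
  shows "(\<Sum>m\<in>\<M>. \<Sum>m'\<in>\<M>. t m * (t m' * g m m')) \<notin> m0"
proof
  define f where "f = (\<lambda>(m, m'). t m * (t m' * g m m'))"
  have I: "is_ideal m0" using m0 by (rule maximal_ideal_is_ideal)
  assume "(\<Sum>m\<in>\<M>. \<Sum>m'\<in>\<M>. t m * (t m' * g m m')) \<in> m0"
  then have sum_in: "sum f (\<M> \<times> \<M>) \<in> m0"
    unfolding f_def by (simp only: sum.cartesian_product)
  have "sum f (\<M> \<times> \<M>) = f (m0, m0) + sum f (\<M> \<times> \<M> - {(m0, m0)})"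
    using assms(2,3) by (simp add: sum.remove)
  moreover have "sum f (\<M> \<times> \<M> - {(m0, m0)}) \<in> m0"
  proof (rule is_ideal_sum[OF I])
    fix p assume p: "p \<in> \<M> \<times> \<M> - {(m0, m0)}"
    obtain m m' where p_eq: "p = (m, m')" by fastforce
    have "t m \<in> m0 \<or> t m' \<in> m0"
      using t_in p unfolding p_eq by auto
    then show "f p \<in> m0"
      unfolding f_def p_eq using is_ideal_mult_left[OF I] is_ideal_mult_right[OF I] by auto
  qed
  ultimately have "f (m0, m0) \<in> m0"
    using is_ideal_diff[OF I sum_in] by (metis add_diff_cancel_right')
  moreover have "f (m0, m0) \<notin> m0"
    unfolding f_def using maximal_ideal_mult_notin[OF m0] assms(4,6) by simp
  ultimately show False by contradiction
qed

text \<open>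
  The vectors \<open>y\<close> and \<open>u\<close> carry the separating element \<open>t\<^sub>m\<close> of each maximal ideal \<open>m\<close> at the
  position of an entry of \<open>G\<close> outside \<open>m\<close>, so that \<open>y\<^sup>T G u\<close> lies in no maximal ideal.
\<close>

lemma semilocal_bilinear_form_eq_one:
  fixes G :: "'a::comm_ring_1^'n::finite^'m::finite"
  assumes fin: "finite {I::'a set. maximal_ideal I}"
    and entry: "\<And>m. maximal_ideal m \<Longrightarrow> \<exists>k l. G$k$l \<notin> m"
  obtains y u where "vec_dot y (G *v u) = 1"
proof -
  define \<M> where "\<M> = {I::'a set. maximal_ideal I}"
  have "\<exists>s. s \<notin> m \<and> (\<forall>m'\<in>\<M>. m' \<noteq> m \<longrightarrow> s \<in> m')" if "m \<in> \<M>" for m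
    using semilocal_separating_element[OF fin, of m] that unfolding \<M>_def by (metis mem_Collect_eq)
  then obtain t where t_notin: "\<And>m. m \<in> \<M> \<Longrightarrow> t m \<notin> m"
    and t_in: "\<And>m m'. m \<in> \<M> \<Longrightarrow> m' \<in> \<M> \<Longrightarrow> m' \<noteq> m \<Longrightarrow> t m \<in> m'"
    by metis
  have "\<exists>k l. G$k$l \<notin> m" if "m \<in> \<M>" for m
    using entry that unfolding \<M>_def by simp
  then obtain k l where kl: "\<And>m. m \<in> \<M> \<Longrightarrow> G$(k m)$(l m) \<notin> m"
    by metis
  define y :: "'a^'m" where "y = (\<chi> i. \<Sum>m\<in>\<M>. if k m = i then t m else 0)"
  define u :: "'a^'n" where "u = (\<chi> j. \<Sum>m\<in>\<M>. if l m = j then t m else 0)"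
  have Gu: "(G *v u)$i = (\<Sum>m'\<in>\<M>. t m' * G$i$(l m'))" for i
    using sum_sum_delta_mult[where idx = l and S = \<M> and t = t and v = "\<lambda>j. G$i$j"]
    by (simp add: matrix_vector_mult_def u_def mult.commute)
  have c_eq: "vec_dot y (G *v u) = (\<Sum>m\<in>\<M>. \<Sum>m'\<in>\<M>. t m * (t m' * G$(k m)$(l m')))"
    using sum_sum_delta_mult[where idx = k and S = \<M> and t = t and v = "\<lambda>i. (G *v u)$i"]
    by (simp add: vec_dot_def y_def Gu sum_distrib_left)
  have "vec_dot y (G *v u) \<notin> m0" if "maximal_ideal m0" for m0
  proof -
    have "m0 \<in> \<M>" using that unfolding \<M>_def by simp
    then show ?thesis
      unfolding c_eq using fin t_notin t_in kl
      by (intro separated_double_sum_notin_maximal_ideal[OF that]) (auto simp: \<M>_def)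
  qed
  then obtain d where d: "vec_dot y (G *v u) * d = 1"
    by (rule unit_if_notin_maximal_ideals)
  have "vec_dot (d *s y) (G *v u) = d * vec_dot y (G *v u)"
    by (simp add: vec_dot_def sum_distrib_left mult.assoc)
  with d show ?thesis
    by (intro that[of "d *s y" u]) (simp add: mult.commute)
qed

section \<open>Matrix units\<close>

definition matrix_unit :: "'n::finite \<Rightarrow> 'n \<Rightarrow> 'a::semiring_1^'n^'n" where
  "matrix_unit i j = (\<chi> k l. if k = i \<and> l = j then 1 else 0)"

lemma matrix_mult_matrix_unit_entry:
  "((M::'a::semiring_1^'n::finite^'n) ** matrix_unit i j)$k$l = (if l = j then M$k$i else 0)"
  by (simp add: matrix_matrix_mult_def matrix_unit_def if_distrib[of "\<lambda>x. _ * x"] sum.delta'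
      cong: if_cong)

lemma matrix_unit_mult_entry:
  "(matrix_unit i j ** (M::'a::semiring_1^'n::finite^'n))$k$l = (if k = i then M$j$l else 0)"
  by (simp add: matrix_matrix_mult_def matrix_unit_def if_distrib[of "\<lambda>x. x * _"] sum.delta
      cong: if_cong)

lemma matrix_unit_mult_matrix_unit:
  "matrix_unit i j ** matrix_unit k l = (if j = k then matrix_unit i l else (0::'a::semiring_1^'n::finite^'n))"
  by (auto simp: vec_eq_iff matrix_mult_matrix_unit_entry) (auto simp: matrix_unit_def)

lemma mat_1_eq_sum_matrix_unit: "(mat 1 :: 'a::semiring_1^'n::finite^'n) = (\<Sum>i\<in>UNIV. matrix_unit i i)"
  by (simp add: vec_eq_iff mat_def matrix_unit_def sum_component flip: if_if_eq_conj)

lemma matrix_eq_sum_matrix_unit: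
  "(A::'a::semiring_1^'n::finite^'n) = (\<Sum>i\<in>UNIV. \<Sum>j\<in>UNIV. mscale (A$i$j) (matrix_unit i j))"
proof -
  have "(\<Sum>j\<in>UNIV. A$i$j * (if k = i \<and> l = j then 1 else 0)) = (if k = i then A$i$l else 0)" for i k l
    by (cases "k = i") (simp_all add: if_distrib[of "\<lambda>x. _ * x"] sum.delta' cong: if_cong)
  then show ?thesis
    by (simp add: vec_eq_iff mscale_def matrix_unit_def sum_component)
qed

lemma mscale_matrix_mult_left: "mscale r A ** B = mscale r (A ** B)"
  for A :: "'a::comm_semiring_1^'n::finite^'m" and B :: "'a^'p^'n"
  by (simp add: vec_eq_iff mscale_def matrix_matrix_mult_def sum_distrib_left mult.assoc)

lemma mscale_matrix_mult_right: "A ** mscale r B = mscale r (A ** B)"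
  for A :: "'a::comm_semiring_1^'n::finite^'m" and B :: "'a^'p^'n"
  by (simp add: vec_eq_iff mscale_def matrix_matrix_mult_def sum_distrib_left mult.left_commute)

lemma transpose_mscale: "transpose (mscale r A) = mscale r (transpose A)"
  by (simp add: vec_eq_iff mscale_def transpose_def)

lemma mscale_mscale: "mscale r (mscale s A) = mscale (r * s) A"
  by (simp add: vec_eq_iff mscale_def mult.assoc)

lemma mscale_1 [simp]: "mscale 1 A = A"
  by (simp add: vec_eq_iff mscale_def)

lemma mscale_mat_1_eq_iff: "mscale r (mat 1 :: 'a::semiring_1^'n^'n) = mat 1 \<longleftrightarrow> r = 1"
  by (auto simp: vec_eq_iff mscale_def mat_def)

lemma matrix_add_rdistrib: "(A + B) ** C = A ** C + B ** C"
  for A B :: "'a::semiring_1^'n::finite^'m" and C :: "'a^'p^'n"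
  by (simp add: vec_eq_iff matrix_matrix_mult_def distrib_right sum.distrib)

lemma transpose_add: "transpose (A + B) = transpose A + transpose B"
  by (simp add: vec_eq_iff transpose_def)

lemma additive_sum:
  fixes f :: "'b::ab_group_add \<Rightarrow> 'c::ab_group_add"
  assumes "\<And>x y. f (x + y) = f x + f y"
  shows "f (\<Sum>i\<in>S. g i) = (\<Sum>i\<in>S. f (g i))"
proof -
  have "f 0 = 0" using assms[of 0 0] by simp
  then show ?thesis using sum_comp_morphism[of f g S] assms by (simp add: comp_def)
qed

lemma matrix_linear_map_eqI:
  fixes f g :: "'a::comm_ring_1^'n::finite^'n \<Rightarrow> 'a^'p^'q"
  assumes "\<And>A B. f (A + B) = f A + f B" and "\<And>r A. f (mscale r A) = mscale r (f A)"
    and "\<And>A B. g (A + B) = g A + g B" and "\<And>r A. g (mscale r A) = mscale r (g A)"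
    and "\<And>i j. f (matrix_unit i j) = g (matrix_unit i j)"
  shows "f A = g A"
proof -
  have "f A = f (\<Sum>i\<in>UNIV. \<Sum>j\<in>UNIV. mscale (A$i$j) (matrix_unit i j))"
    by (subst matrix_eq_sum_matrix_unit) (rule refl)
  also have "\<dots> = (\<Sum>i\<in>UNIV. \<Sum>j\<in>UNIV. mscale (A$i$j) (g (matrix_unit i j)))"
    by (simp add: additive_sum[of f] assms)
  also have "\<dots> = g (\<Sum>i\<in>UNIV. \<Sum>j\<in>UNIV. mscale (A$i$j) (matrix_unit i j))"
    by (simp add: additive_sum[of g] assms)
  also have "\<dots> = g A"
    by (subst (2) matrix_eq_sum_matrix_unit) (rule refl)
  finally show ?thesis .
qed

lemma matrix_commuting_with_units_eq_scalar:
  fixes M :: "'a::comm_ring_1^'n::finite^'n"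
  assumes "\<And>i j. M ** matrix_unit i j = matrix_unit i j ** M"
  shows "M = mscale (M$i$i) (mat 1)"
proof -
  have diag: "M$k$k = M$l$l" for k l
    using arg_cong[OF assms[of k l], of "\<lambda>X. X$k$l"]
    by (simp add: matrix_mult_matrix_unit_entry matrix_unit_mult_entry)
  have off_diag: "M$k$l = 0" if "k \<noteq> l" for k l
    using arg_cong[OF assms[of l l], of "\<lambda>X. X$k$l"] that
    by (simp add: matrix_mult_matrix_unit_entry matrix_unit_mult_entry)
  show ?thesis
    by (auto simp: vec_eq_iff mscale_def mat_def intro: diag off_diag)
qed

lemma matrix_inv_eq:
  fixes A :: "'a::semiring_1^'n::finite^'n"
  assumes "A ** B = mat 1" and "B ** A = mat 1"
  shows "matrix_inv A = B"
proof -
  have "matrix_inv A ** A = mat 1"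
    unfolding matrix_inv_def using someI[of "\<lambda>A'. A ** A' = mat 1 \<and> A' ** A = mat 1", OF conjI[OF assms]]
    by blast
  then have "matrix_inv A = matrix_inv A ** (A ** B)" using assms by simp
  also have "\<dots> = B" using \<open>matrix_inv A ** A = mat 1\<close> by (simp add: matrix_mul_assoc)
  finally show ?thesis .
qed

lemma invertible_matrix_inv:
  fixes A :: "'a::semiring_1^'n::finite^'n"
  assumes "invertible A"
  shows "A ** matrix_inv A = mat 1" and "matrix_inv A ** A = mat 1"
  using someI_ex[OF assms[unfolded invertible_def]] unfolding matrix_inv_def by auto

section \<open>Automorphisms of matrices over a semi-local ring are inner\<close>

lemma matrix_units_entry_notin_maximal_ideal:
  fixes F :: "'n::finite \<Rightarrow> 'n \<Rightarrow> 'a::comm_ring_1^'n^'n"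
  assumes F_mult: "\<And>i j k l. F i j ** F k l = (if j = k then F i l else 0)"
    and F_sum: "(\<Sum>i\<in>UNIV. F i i) = mat 1"
    and m: "maximal_ideal m"
  shows "\<exists>k l. F i0 i0 $ k $ l \<notin> m"
proof (rule ccontr)
  assume "\<not> (\<exists>k l. F i0 i0 $ k $ l \<notin> m)"
  then have G_in: "F i0 i0 $ k $ l \<in> m" for k l by blast
  have I: "is_ideal m" using m by (rule maximal_ideal_is_ideal)
  have "F j j $ k $ l \<in> m" for j k l
  proof -
    have "F j j = F j i0 ** (F i0 i0 ** F i0 j)" by (simp add: F_mult)
    then show ?thesis
      by (simp add: matrix_matrix_mult_def G_in is_ideal_sum[OF I] is_ideal_mult_left[OF I]
          is_ideal_mult_right[OF I])
  qed
  then have "(\<Sum>i\<in>UNIV. F i i) $ i0 $ i0 \<in> m"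
    by (simp add: sum_component is_ideal_sum[OF I])
  then show False
    using one_notin_maximal_ideal[OF m] by (simp add: F_sum mat_def)
qed

text \<open>
  \<open>P\<close> has the columns \<open>F\<^sub>j\<^sub>,\<^sub>i\<^sub>0 u\<close> and \<open>Q\<close> the rows \<open>y\<^sup>T F\<^sub>i\<^sub>0\<^sub>,\<^sub>i\<close>; then \<open>Q P = 1\<close> because
  \<open>F\<^sub>i\<^sub>0\<^sub>,\<^sub>i F\<^sub>j\<^sub>,\<^sub>i\<^sub>0\<close> is \<open>F\<^sub>i\<^sub>0\<^sub>,\<^sub>i\<^sub>0\<close> for \<open>i = j\<close> and \<open>0\<close> otherwise.
\<close>

lemma matrix_units_conjugate:
  fixes F :: "'n::finite \<Rightarrow> 'n \<Rightarrow> 'a::comm_ring_1^'n^'n"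
  assumes F_mult: "\<And>i j k l. F i j ** F k l = (if j = k then F i l else 0)"
    and yu: "vec_dot y (F i0 i0 *v u) = 1"
  obtains P Q where "Q ** P = mat 1"
    and "\<And>i j. P ** matrix_unit i j = F i j ** P"
    and "\<And>i j. Q ** F i j = matrix_unit i j ** Q"
proof -
  define P :: "'a^'n^'n" where "P = (\<chi> k j. (F j i0 *v u)$k)"
  define Q :: "'a^'n^'n" where "Q = (\<chi> i k. (y v* F i0 i)$k)"
  have "(Q ** P)$i$j = vec_dot y ((F i0 i ** F j i0) *v u)" for i j
    by (simp add: matrix_matrix_mult_def P_def Q_def vec_dot_def[symmetric]
        vec_dot_vector_matrix_mult matrix_vector_mul_assoc)
  then have "Q ** P = mat 1"
    using yu by (simp add: vec_eq_iff F_mult mat_def vec_dot_def)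
  moreover have "P ** matrix_unit i j = F i j ** P" for i j
  proof -
    have "(F i j ** P)$k$l = (F i j *v (F l i0 *v u))$k" for k l
      by (simp add: matrix_matrix_mult_def P_def matrix_vector_mult_def)
    then have "(F i j ** P)$k$l = ((F i j ** F l i0) *v u)$k" for k l
      by (simp add: matrix_vector_mul_assoc)
    then show ?thesis
      by (simp add: vec_eq_iff matrix_mult_matrix_unit_entry F_mult P_def)
  qed
  moreover have "Q ** F i j = matrix_unit i j ** Q" for i j
  proof -
    have "(Q ** F i j)$k$l = ((y v* F i0 k) v* F i j)$l" for k l
      by (simp add: matrix_matrix_mult_def Q_def vector_matrix_mult_def)
    then have "(Q ** F i j)$k$l = (y v* (F i0 k ** F i j))$l" for k l
      by (simp add: vector_matrix_mul_assoc)
    then show ?thesis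
      by (simp add: vec_eq_iff matrix_unit_mult_entry F_mult Q_def)
  qed
  ultimately show ?thesis by (rule that)
qed

lemma intertwining_left_inverse_is_inverse:
  fixes P Q :: "'a::comm_ring_1^'n::finite^'n"
  assumes QP: "Q ** P = mat 1" and \<phi>P: "\<And>A. \<phi> A ** P = P ** A"
    and Q\<phi>: "\<And>A. Q ** \<phi> A = A ** Q" and "surj \<phi>"
  shows "P ** Q = mat 1"
proof -
  have "(P ** Q) ** A = A ** (P ** Q)" for A
  proof -
    obtain B where A: "A = \<phi> B" using \<open>surj \<phi>\<close> by (metis surjD)
    have "(P ** Q) ** \<phi> B = (P ** B) ** Q"
      by (simp add: Q\<phi> flip: matrix_mul_assoc)
    also have "\<dots> = \<phi> B ** (P ** Q)"
      by (simp add: \<phi>P matrix_mul_assoc)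
    finally show ?thesis unfolding A .
  qed
  then have "P ** Q = mscale ((P ** Q)$i$i) (mat 1)" for i
    by (intro matrix_commuting_with_units_eq_scalar) simp
  then obtain c where PQ_c: "P ** Q = mscale c (mat 1)"
    by blast
  have "mscale c (mat 1) = Q ** (P ** Q) ** P"
    by (simp add: PQ_c mscale_matrix_mult_left mscale_matrix_mult_right QP)
  also have "\<dots> = (Q ** P) ** (Q ** P)"
    by (simp add: matrix_mul_assoc)
  finally have "c = 1"
    by (simp add: QP mscale_mat_1_eq_iff)
  then show ?thesis
    using PQ_c by simp
qed

lemma semilocal_matrix_automorphism_inner:
  fixes \<phi> :: "'a::comm_ring_1^'n::finite^'n \<Rightarrow> 'a^'n^'n"
  assumes fin: "finite {I::'a set. maximal_ideal I}"
    and add: "\<And>A B. \<phi> (A + B) = \<phi> A + \<phi> B"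
    and mult: "\<And>A B. \<phi> (A ** B) = \<phi> A ** \<phi> B"
    and one: "\<phi> (mat 1) = mat 1"
    and scale: "\<And>r A. \<phi> (mscale r A) = mscale r (\<phi> A)"
    and "surj \<phi>"
  obtains P Q where "P ** Q = mat 1" and "Q ** P = mat 1" and "\<And>A. \<phi> A = P ** A ** Q"
proof -
  define F where "F i j = \<phi> (matrix_unit i j)" for i j
  have "\<phi> 0 = 0" using add[of 0 0] by simp
  then have F_mult: "F i j ** F k l = (if j = k then F i l else 0)" for i j k l
    by (simp add: F_def matrix_unit_mult_matrix_unit flip: mult)
  have F_sum: "(\<Sum>i\<in>UNIV. F i i) = mat 1"
    using one by (simp add: F_def mat_1_eq_sum_matrix_unit additive_sum[of \<phi>, OF add])
  fix i0 :: 'n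
  obtain y u where "vec_dot y (F i0 i0 *v u) = 1"
    using semilocal_bilinear_form_eq_one[OF fin matrix_units_entry_notin_maximal_ideal[OF F_mult F_sum]]
    by blast
  then obtain P Q where QP: "Q ** P = mat 1"
    and PE: "\<And>i j. P ** matrix_unit i j = F i j ** P"
    and QF: "\<And>i j. Q ** F i j = matrix_unit i j ** Q"
    by (rule matrix_units_conjugate[OF F_mult]) (rule that; assumption)
  have \<phi>P: "\<phi> A ** P = P ** A" for A
    by (rule matrix_linear_map_eqI[of "\<lambda>A. \<phi> A ** P" "\<lambda>A. P ** A"])
      (simp_all add: add scale matrix_add_rdistrib matrix_add_ldistrib mscale_matrix_mult_left
        mscale_matrix_mult_right PE[unfolded F_def])
  have Q\<phi>: "Q ** \<phi> A = A ** Q" for A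
    by (rule matrix_linear_map_eqI[of "\<lambda>A. Q ** \<phi> A" "\<lambda>A. A ** Q"])
      (simp_all add: add scale matrix_add_rdistrib matrix_add_ldistrib mscale_matrix_mult_left
        mscale_matrix_mult_right QF[unfolded F_def])
  have PQ: "P ** Q = mat 1"
    using QP \<phi>P Q\<phi> \<open>surj \<phi>\<close> by (rule intertwining_left_inverse_is_inverse)
  have "\<phi> A = P ** A ** Q" for A
  proof -
    have "\<phi> A = (\<phi> A ** P) ** Q" by (simp add: PQ flip: matrix_mul_assoc)
    also have "\<dots> = P ** A ** Q" by (simp only: \<phi>P)
    finally show ?thesis .
  qed
  with PQ QP show ?thesis by (rule that)
qed

section \<open>Star maps on matrix rings\<close>

lemma conj_transpose_involutive_imp_symmetric:
  fixes C C' :: "'a::comm_ring_1^'n::finite^'n"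
  assumes CC': "C ** C' = mat 1" and C'C: "C' ** C = mat 1"
    and involutive: "\<And>A. C' ** transpose (C' ** transpose A ** C) ** C = A"
  obtains a where "transpose C = mscale a C" and "a * a = 1"
proof -
  define X where "X = C' ** transpose C"
  define Y where "Y = transpose C' ** C"
  have XAY: "X ** A ** Y = A" for A
    using involutive[of A] by (simp add: X_def Y_def matrix_transpose_mul matrix_mul_assoc)
  have "Y ** X = transpose C' ** (C ** C') ** transpose C"
    by (simp add: X_def Y_def matrix_mul_assoc)
  also have "\<dots> = transpose (C ** C')"
    by (simp add: CC' flip: matrix_transpose_mul)
  finally have YX: "Y ** X = mat 1" by (simp add: CC')
  have "X ** A = A ** X" for A
  proof -
    have "X ** A = (X ** A ** Y) ** X" by (simp add: YX flip: matrix_mul_assoc)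
    then show ?thesis by (simp only: XAY)
  qed
  then have X: "X = mscale (X$i$i) (mat 1)" for i
    by (intro matrix_commuting_with_units_eq_scalar) simp
  then obtain a where Xa: "X = mscale a (mat 1)" by blast
  have "transpose C = C ** X"
    by (simp add: X_def matrix_mul_assoc CC')
  then have tC: "transpose C = mscale a C"
    by (simp add: Xa mscale_matrix_mult_right)
  have "C = transpose (transpose C)" by simp
  also have "\<dots> = mscale a (transpose C)" by (simp only: tC transpose_mscale)
  also have "\<dots> = mscale (a * a) C" by (simp add: tC mscale_mscale)
  finally have "C = mscale (a * a) C" .
  then have "mscale (a * a) (C' ** C) = C' ** C"
    by (metis mscale_matrix_mult_right)
  then have "a * a = 1"
    by (simp add: C'C mscale_mat_1_eq_iff)
  with tC show ?thesis by (rule that)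
qed

lemma conj_transpose_star_algebra_map:
  fixes C :: "'a::comm_ring_1^'n::finite^'n"
  assumes "invertible C" and tC: "transpose C = mscale a C" and aa: "a * a = 1"
  shows "is_star_algebra_map (\<lambda>A. matrix_inv C ** transpose A ** C)"
proof -
  define C' where "C' = matrix_inv C"
  have CC': "C ** C' = mat 1" and C'C: "C' ** C = mat 1"
    using invertible_matrix_inv[OF \<open>invertible C\<close>] by (simp_all add: C'_def)
  have "mscale a (transpose C' ** C) = mat 1"
    using arg_cong[OF CC', of transpose] by (simp add: matrix_transpose_mul tC mscale_matrix_mult_right)
  then have "mscale a (transpose C') = C'"
    by (metis C'C matrix_mul_assoc matrix_mul_rid mscale_matrix_mult_left matrix_mul_lid CC')
  then have tC': "transpose C' = mscale a C'"
    by (metis aa mscale_mscale mscale_1)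
  show ?thesis
    unfolding is_star_algebra_map_def C'_def[symmetric]
  proof (intro conjI allI)
    fix A B
    show "C' ** transpose (A + B) ** C = C' ** transpose A ** C + C' ** transpose B ** C"
      by (simp add: transpose_add matrix_add_ldistrib matrix_add_rdistrib)
    show "C' ** transpose (A ** B) ** C = (C' ** transpose B ** C) ** (C' ** transpose A ** C)"
      by (simp add: matrix_transpose_mul matrix_mul_assoc) (simp add: CC' flip: matrix_mul_assoc)
  next
    show "C' ** transpose (mat 1) ** C = mat 1" by (simp add: C'C)
  next
    fix r A
    show "C' ** transpose (mscale r A) ** C = mscale r (C' ** transpose A ** C)"
      by (simp add: transpose_mscale mscale_matrix_mult_left mscale_matrix_mult_right)
  next
    fix A
    show "C' ** transpose (C' ** transpose A ** C) ** C = A"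
      by (simp add: matrix_transpose_mul tC tC' mscale_matrix_mult_left mscale_matrix_mult_right
          mscale_mscale aa matrix_mul_assoc C'C) (simp add: CC' C'C flip: matrix_mul_assoc)
  qed
qed

lemma semilocal_star_algebra_map_eq_conj_transpose:
  fixes star :: "'a::comm_ring_1^'n::finite^'n \<Rightarrow> 'a^'n^'n"
  assumes fin: "finite {I::'a set. maximal_ideal I}" and star: "is_star_algebra_map star"
  obtains C a where "invertible C" and "transpose C = mscale a C" and "a * a = 1"
    and "\<And>A. star A = matrix_inv C ** transpose A ** C"
proof -
  have involutive: "star (star A) = A" for A
    using star by (simp add: is_star_algebra_map_def)
  let ?\<phi> = "\<lambda>A. transpose (star A)"
  have "?\<phi> (A + B) = ?\<phi> A + ?\<phi> B" "?\<phi> (A ** B) = ?\<phi> A ** ?\<phi> B" "?\<phi> (mat 1) = mat 1"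
    "?\<phi> (mscale r A) = mscale r (?\<phi> A)" for A B r
    using star by (simp_all add: is_star_algebra_map_def transpose_add matrix_transpose_mul transpose_mscale)
  moreover have "surj ?\<phi>"
    by (rule surjI[of _ "\<lambda>A. star (transpose A)"]) (simp add: involutive)
  ultimately obtain P Q where PQ: "P ** Q = mat 1" and QP: "Q ** P = mat 1"
    and conj: "\<And>A. transpose (star A) = P ** A ** Q"
    by (rule semilocal_matrix_automorphism_inner[OF fin]) (rule that; assumption)
  define C where "C = transpose P"
  have CC': "C ** transpose Q = mat 1" and C'C: "transpose Q ** C = mat 1"
    by (simp_all add: C_def flip: matrix_transpose_mul add: PQ QP)
  have star_eq: "star A = transpose Q ** transpose A ** C" for A
    using arg_cong[OF conj[of A], of transpose] by (simp add: C_def matrix_transpose_mul matrix_mul_assoc)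
  have inv_C: "matrix_inv C = transpose Q"
    using CC' C'C by (rule matrix_inv_eq)
  obtain a where "transpose C = mscale a C" and "a * a = 1"
    using CC' C'C by (rule conj_transpose_involutive_imp_symmetric) (simp flip: star_eq add: involutive)
  moreover have "invertible C"
    unfolding invertible_def using CC' C'C by blast
  ultimately show ?thesis
    using that star_eq by (simp add: inv_C)
qed

theorem proposition3p1:
  fixes star :: "'a::comm_ring_1^'n::finite^'n \<Rightarrow> 'a^'n^'n"
  assumes "noetherian_cring TYPE('a)"
      and "semilocal_cring TYPE('a)"
  shows "is_star_algebra_map star \<longleftrightarrow>
    (\<exists>(C :: 'a^'n^'n) (a :: 'a). invertible C \<and> transpose C = mscale a C \<and> a * a = 1 \<and>
        (\<forall>A. star A = matrix_inv C ** transpose A ** C))"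
proof
  assume "is_star_algebra_map star"
  moreover have "finite {I::'a set. maximal_ideal I}"
    using assms(2) by (simp add: semilocal_cring_def)
  ultimately show "\<exists>C a. invertible C \<and> transpose C = mscale a C \<and> a * a = 1 \<and>
      (\<forall>A. star A = matrix_inv C ** transpose A ** C)"
    by (metis semilocal_star_algebra_map_eq_conj_transpose)
next
  assume "\<exists>C a. invertible C \<and> transpose C = mscale a C \<and> a * a = 1 \<and>
      (\<forall>A. star A = matrix_inv C ** transpose A ** C)"
  then obtain C a where "invertible C" "transpose C = mscale a C" "a * a = 1"
    and "star = (\<lambda>A. matrix_inv C ** transpose A ** C)"
    by blast
  then show "is_star_algebra_map star"
    by (simp add: conj_transpose_star_algebra_map)
qed

end
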